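(* Let $\pi_1, \ldots, \pi_k \geqslant 3$ be pairwise distinct integers. Then $\prod_{i=1}^k (2^{\pi_i}-2) \geqslant \frac{1}{2} \prod_{i=1}^k 2^{\pi_i}$. *)

theory Defs
  imports Complex_Main
begin

end

theory Submission
  imports Defs "HOL-Analysis.Infinite_Products"
begin

text \<open>Write \<open>2^m - 2 = 2^m (1 - 2/2^m)\<close>. By the Weierstrass product inequality
  \<open>\<Prod>(1 - x\<^sub>m) \<ge> 1 - \<Sum>x\<^sub>m\<close> it suffices that \<open>\<Sum>2/2^m \<le> 1/2\<close> over the exponents; since they
  are distinct and at least 3, this sum is dominated by \<open>2 (1/8 + 1/16 + \<dots>) = 1/2\<close>.\<close>

lemma geometric_sum_atLeast_less:
  fixes x :: "'a::linordered_field"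
  assumes "0 < x" "x < 1" "finite S" "\<And>m. m \<in> S \<Longrightarrow> n \<le> m"
  shows "(\<Sum>m\<in>S. x ^ m) < x ^ n / (1 - x)"
proof -
  let ?T = "(\<lambda>m. m - n) ` S"
  have "(\<Sum>m\<in>S. x ^ m) = (\<Sum>i\<in>?T. x ^ (n + i))"
    by (rule sum.reindex_bij_witness [where i = "\<lambda>i. n + i" and j = "\<lambda>m. m - n"])
      (use assms(4) in auto)
  also have "\<dots> = x ^ n * (\<Sum>i\<in>?T. x ^ i)"
    by (rule sum_power_add)
  also have "\<dots> < x ^ n * (1 / (1 - x))"
    using assms by (intro mult_strict_left_mono geometric_sum_less) auto
  finally show ?thesis by simp
qed

lemma prod_one_minus_two_over_powers_two_ge:
  assumes "finite S" "\<And>m. m \<in> S \<Longrightarrow> 3 \<le> m"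
  shows "(\<Prod>m\<in>S. 1 - 2 / (2::real) ^ m) \<ge> 1 / 2"
proof -
  have "(\<Sum>m\<in>S. (1/2::real) ^ m) < (1/2) ^ 3 / (1 - 1/2)"
    using assms by (intro geometric_sum_atLeast_less) auto
  also have "\<dots> = 1 / 4"
    by (simp add: power3_eq_cube)
  moreover have "(\<Sum>m\<in>S. 2 / (2::real) ^ m) = 2 * (\<Sum>m\<in>S. (1/2) ^ m)"
    by (simp add: sum_distrib_left power_one_over)
  ultimately have sum_le: "(\<Sum>m\<in>S. 2 / (2::real) ^ m) \<le> 1 / 2"
    by linarith
  have "2 / (2::real) ^ m \<in> {0..1}" if "m \<in> S" for m
  proof -
    have "(2::real) ^ 1 \<le> 2 ^ m"
      using assms(2) [OF that] by (intro power_increasing) auto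
    then show ?thesis by simp
  qed
  then have "1 - (\<Sum>m\<in>S. 2 / (2::real) ^ m) \<le> (\<Prod>m\<in>S. 1 - 2 / 2 ^ m)"
    by (rule Weierstrass_prod_ineq)
  with sum_le show ?thesis by linarith
qed

theorem lemma7:
  fixes k :: nat and \<pi> :: "nat \<Rightarrow> nat"
  assumes ge3: "\<And>i. i \<in> {1..k} \<Longrightarrow> \<pi> i \<ge> 3"
    and distinct: "inj_on \<pi> {1..k}"
  shows "(\<Prod>i=1..k. (2::real) ^ \<pi> i - 2) \<ge> (1/2) * (\<Prod>i=1..k. (2::real) ^ \<pi> i)"
proof -
  have factor: "(2::real) ^ m - 2 = 2 ^ m * (1 - 2 / 2 ^ m)" for m :: nat
    by (simp add: right_diff_distrib)
  have "(\<Prod>i=1..k. 1 - 2 / (2::real) ^ \<pi> i) = (\<Prod>m\<in>\<pi> ` {1..k}. 1 - 2 / 2 ^ m)"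
    unfolding prod.reindex [OF distinct] comp_def ..
  also have "\<dots> \<ge> 1 / 2"
    using ge3 by (intro prod_one_minus_two_over_powers_two_ge) auto
  finally have "(\<Prod>i=1..k. (2::real) ^ \<pi> i) * (1/2)
      \<le> (\<Prod>i=1..k. 2 ^ \<pi> i) * (\<Prod>i=1..k. 1 - 2 / (2::real) ^ \<pi> i)"
    by (rule mult_left_mono) (simp add: prod_nonneg)
  then show ?thesis
    unfolding factor prod.distrib by linarith
qed

end
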